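(* Let $T$ be an $\mathcal O$-operator on a Lie algebra $\mathfrak g$ with respect to a representation $(V;\rho)$. If two one-parameter formal deformations $\overline T_t=\sum_{i\ge0}\bar\tau_it^i$ and $T_t=\sum_{i\ge0}\tau_it^i$ of $T$ are equivalent, then their infinitesimals $\bar\tau_1$ and $\tau_1$ are in the same cohomology class of $\mathcal H^1(V,\mathfrak g)$.
   Context: An $\mathcal O$-operator: linear $T:V\to\mathfrak g$ with $[Tu,Tv]=T(\rho(Tu)(v)-\rho(Tv)(u))$. A one-parameter formal deformation of $T$: $T_t=\sum_{i\ge0}\tau_it^i$ with $\tau_i\in\mathrm{Hom}(V,\mathfrak g)$, $\tau_0=T$, extended $\mathbb K[[t]]$-linearly, satisfying $[T_t(u),T_t(v)]=T_t(\rho(T_t(u))(v)-\rho(T_t(v))(u))$ in $\mathfrak g[[t]]$; $\tau_1$ is its infinitesimal. Two formal deformations $\overline T_t$, $T_t$ of $T$ are equivalent if there exist $x\in\mathfrak g$, $\phi_i\in\mathfrak{gl}(\mathfrak g)$, $\varphi_i\in\mathfrak{gl}(V)$ ($i\ge2$) such that $\phi_t=\mathrm{Id}_{\mathfrak g}+t\,\mathrm{ad}_x+\sum_{i\ge2}\phi_it^i$ and $\varphi_t=\mathrm{Id}_V+t\rho(x)+\sum_{i\ge2}\varphi_it^i$ satisfy: $[\phi_t(y),\phi_t(z)]=\phi_t[y,z]$ for $y,z\in\mathfrak g$; $T_t\circ\varphi_t=\phi_t\circ\overline T_t$; and $\varphi_t\rho(y)u=\rho(\phi_t(y))\varphi_t(u)$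 for $y\in\mathfrak g,u\in V$. Cohomology: $[u,v]_T=\rho(Tu)(v)-\rho(Tv)(u)$ is a Lie bracket on $V$; $\bar\rho(u)(y)=[Tu,y]+T\rho(y)(u)$ is a representation of $(V,[\cdot,\cdot]_T)$ on $\mathfrak g$; $\mathcal H^k(V,\mathfrak g)$ is the corresponding Chevalley–Eilenberg cohomology, with $d_{\bar\rho}y(u)=[Tu,y]+T\rho(y)(u)$ for $y\in\mathfrak g$ and $d_{\bar\rho}f(u,v)=[Tu,f(v)]-[Tv,f(u)]-T(\rho(f(u))(v)-\rho(f(v))(u))-f([u,v]_T)$ for $f\in\mathrm{Hom}(V,\mathfrak g)$. *)

theory Defs
  imports Complex_Main
begin

text \<open>Vector spaces over an arbitrary field 'k are given by an explicit scalar
multiplication; linear maps are Vector_Spaces.linear.\<close>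

definition lie_algebra :: "('k::field \<Rightarrow> 'g \<Rightarrow> 'g::ab_group_add) \<Rightarrow> ('g \<Rightarrow> 'g \<Rightarrow> 'g) \<Rightarrow> bool" where
  "lie_algebra sg br \<longleftrightarrow>
     vector_space sg \<and>
     (\<forall>x. Vector_Spaces.linear sg sg (br x)) \<and>
     (\<forall>y. Vector_Spaces.linear sg sg (\<lambda>x. br x y)) \<and>
     (\<forall>x. br x x = 0) \<and>
     (\<forall>x y z. br x (br y z) + br y (br z x) + br z (br x y) = 0)"

definition lie_rep :: "('k::field \<Rightarrow> 'g \<Rightarrow> 'g::ab_group_add) \<Rightarrow> ('g \<Rightarrow> 'g \<Rightarrow> 'g) \<Rightarrow>
    ('k \<Rightarrow> 'v \<Rightarrow> 'v::ab_group_add) \<Rightarrow> ('g \<Rightarrow> 'v \<Rightarrow> 'v) \<Rightarrow> bool" where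
  "lie_rep sg br sv \<rho> \<longleftrightarrow>
     lie_algebra sg br \<and> vector_space sv \<and>
     (\<forall>x y u. \<rho> (x + y) u = \<rho> x u + \<rho> y u) \<and>
     (\<forall>c x u. \<rho> (sg c x) u = sv c (\<rho> x u)) \<and>
     (\<forall>x. Vector_Spaces.linear sv sv (\<rho> x)) \<and>
     (\<forall>x y u. \<rho> (br x y) u = \<rho> x (\<rho> y u) - \<rho> y (\<rho> x u))"

definition O_operator :: "('k::field \<Rightarrow> 'g \<Rightarrow> 'g::ab_group_add) \<Rightarrow> ('g \<Rightarrow> 'g \<Rightarrow> 'g) \<Rightarrow>
    ('k \<Rightarrow> 'v \<Rightarrow> 'v::ab_group_add) \<Rightarrow> ('g \<Rightarrow> 'v \<Rightarrow> 'v) \<Rightarrow> ('v \<Rightarrow> 'g) \<Rightarrow> bool" where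
  "O_operator sg br sv \<rho> T \<longleftrightarrow>
     Vector_Spaces.linear sv sg T \<and>
     (\<forall>u v. br (T u) (T v) = T (\<rho> (T u) v - \<rho> (T v) u))"

text \<open>A one-parameter formal deformation T_t = sum_i \<tau> i t^i of T, with each \<tau> i
in Hom(V,g); the defining identity in g[[t]] is expressed coefficientwise
(coefficient of t^n), for u, v in V.\<close>
definition formal_deformation :: "('k::field \<Rightarrow> 'g \<Rightarrow> 'g::ab_group_add) \<Rightarrow> ('g \<Rightarrow> 'g \<Rightarrow> 'g) \<Rightarrow>
    ('k \<Rightarrow> 'v \<Rightarrow> 'v::ab_group_add) \<Rightarrow> ('g \<Rightarrow> 'v \<Rightarrow> 'v) \<Rightarrow> ('v \<Rightarrow> 'g) \<Rightarrow> (nat \<Rightarrow> 'v \<Rightarrow> 'g) \<Rightarrow> bool" where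
  "formal_deformation sg br sv \<rho> T \<tau> \<longleftrightarrow>
     \<tau> 0 = T \<and>
     (\<forall>i. Vector_Spaces.linear sv sg (\<tau> i)) \<and>
     (\<forall>n u v. (\<Sum>i\<le>n. br (\<tau> i u) (\<tau> (n - i) v)) =
              (\<Sum>i\<le>n. \<tau> i (\<rho> (\<tau> (n - i) u) v - \<rho> (\<tau> (n - i) v) u)))"

text \<open>Equivalence of formal deformations \<tau>bar (= overline T_t) and \<tau> (= T_t):
\<phi> i, \<psi> i are the coefficients of phi_t and varphi_t; all identities coefficientwise.\<close>
definition equivalent_deformations :: "('k::field \<Rightarrow> 'g \<Rightarrow> 'g::ab_group_add) \<Rightarrow> ('g \<Rightarrow> 'g \<Rightarrow> 'g) \<Rightarrow>
    ('k \<Rightarrow> 'v \<Rightarrow> 'v::ab_group_add) \<Rightarrow> ('g \<Rightarrow> 'v \<Rightarrow> 'v) \<Rightarrow> (nat \<Rightarrow> 'v \<Rightarrow> 'g) \<Rightarrow> (nat \<Rightarrow> 'v \<Rightarrow> 'g) \<Rightarrow> bool" where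
  "equivalent_deformations sg br sv \<rho> \<tau>bar \<tau> \<longleftrightarrow>
     (\<exists>x \<phi> \<psi>.
        \<phi> 0 = id \<and> \<phi> 1 = br x \<and> (\<forall>i. Vector_Spaces.linear sg sg (\<phi> i)) \<and>
        \<psi> 0 = id \<and> \<psi> 1 = \<rho> x \<and> (\<forall>i. Vector_Spaces.linear sv sv (\<psi> i)) \<and>
        (\<forall>n y z. (\<Sum>i\<le>n. br (\<phi> i y) (\<phi> (n - i) z)) = \<phi> n (br y z)) \<and>
        (\<forall>n u. (\<Sum>i\<le>n. \<tau> i (\<psi> (n - i) u)) = (\<Sum>i\<le>n. \<phi> i (\<tau>bar (n - i) u))) \<and>
        (\<forall>n y u. \<psi> n (\<rho> y u) = (\<Sum>i\<le>n. \<rho> (\<phi> i y) (\<psi> (n - i) u))))"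

definition d0 :: "('g \<Rightarrow> 'g \<Rightarrow> 'g::ab_group_add) \<Rightarrow> ('g \<Rightarrow> 'v \<Rightarrow> 'v) \<Rightarrow> ('v \<Rightarrow> 'g) \<Rightarrow> 'g \<Rightarrow> 'v \<Rightarrow> 'g" where
  "d0 br \<rho> T y = (\<lambda>u. br (T u) y + T (\<rho> y u))"

definition d1 :: "('g \<Rightarrow> 'g \<Rightarrow> 'g::ab_group_add) \<Rightarrow> ('g \<Rightarrow> 'v \<Rightarrow> 'v::ab_group_add) \<Rightarrow> ('v \<Rightarrow> 'g) \<Rightarrow>
    ('v \<Rightarrow> 'g) \<Rightarrow> 'v \<Rightarrow> 'v \<Rightarrow> 'g" where
  "d1 br \<rho> T f = (\<lambda>u v. br (T u) (f v) - br (T v) (f u)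
                        - T (\<rho> (f u) v - \<rho> (f v) u) - f (\<rho> (T u) v - \<rho> (T v) u))"

definition same_H1_class :: "('k::field \<Rightarrow> 'g \<Rightarrow> 'g::ab_group_add) \<Rightarrow> ('g \<Rightarrow> 'g \<Rightarrow> 'g) \<Rightarrow>
    ('k \<Rightarrow> 'v \<Rightarrow> 'v::ab_group_add) \<Rightarrow> ('g \<Rightarrow> 'v \<Rightarrow> 'v) \<Rightarrow> ('v \<Rightarrow> 'g) \<Rightarrow> ('v \<Rightarrow> 'g) \<Rightarrow> ('v \<Rightarrow> 'g) \<Rightarrow> bool" where
  "same_H1_class sg br sv \<rho> T f g \<longleftrightarrow>
     Vector_Spaces.linear sv sg f \<and> Vector_Spaces.linear sv sg g \<and>
     d1 br \<rho> T f = (\<lambda>u v. 0) \<and> d1 br \<rho> T g = (\<lambda>u v. 0) \<and>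
     (\<exists>y. (\<lambda>u. f u - g u) = d0 br \<rho> T y)"

end

theory Submission
  imports Defs
begin

text \<open>Both claims are read off the coefficient of \<open>t\<close>. In the deformation equation it
says \<open>[Tu, \<tau>\<^sub>1 v] + [\<tau>\<^sub>1 u, Tv] = T(\<rho>(\<tau>\<^sub>1 u)v - \<rho>(\<tau>\<^sub>1 v)u) + \<tau>\<^sub>1[u,v]\<^sub>T\<close>, which is
\<open>d\<tau>\<^sub>1 = 0\<close> after antisymmetry of the bracket. In \<open>T\<^sub>t \<circ> \<psi>\<^sub>t = \<phi>\<^sub>t \<circ> \<tau>bar\<^sub>t\<close> it says
\<open>\<tau>\<^sub>1 u + T(\<rho>(x)u) = \<tau>bar\<^sub>1 u + [x, Tu]\<close>, i.e. \<open>\<tau>bar\<^sub>1 - \<tau>\<^sub>1 = d x\<close>.\<close>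

lemma lie_algebra_bracket_antisym:
  assumes "lie_algebra sg br"
  shows "br a b = - br b a"
proof -
  from assms have left: "Vector_Spaces.linear sg sg (br x)"
    and right: "Vector_Spaces.linear sg sg (\<lambda>x. br x y)"
    and alt: "br x x = 0" for x y
    unfolding lie_algebra_def by auto
  have "0 = br (a + b) (a + b)" using alt by simp
  also have "\<dots> = br a (a + b) + br b (a + b)"
    using module_hom.add[OF linear_iff_module_hom[THEN iffD1, OF right]] by simp
  also have "\<dots> = br a b + br b a"
    using module_hom.add[OF linear_iff_module_hom[THEN iffD1, OF left]] alt by simp
  finally show ?thesis by (simp add: eq_neg_iff_add_eq_0)
qed

lemma formal_deformation_infinitesimal_cocycle:
  assumes "lie_algebra sg br"
    and "formal_deformation sg br sv \<rho> T \<tau>"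
  shows "d1 br \<rho> T (\<tau> 1) = (\<lambda>u v. 0)"
proof (intro ext)
  fix u v
  from assms(2) have "\<tau> 0 = T"
    and order_one: "(\<Sum>i\<le>1. br (\<tau> i u) (\<tau> (1 - i) v)) =
                    (\<Sum>i\<le>1. \<tau> i (\<rho> (\<tau> (1 - i) u) v - \<rho> (\<tau> (1 - i) v) u))"
    unfolding formal_deformation_def by blast+
  then have "br (T u) (\<tau> 1 v) + br (\<tau> 1 u) (T v) =
             T (\<rho> (\<tau> 1 u) v - \<rho> (\<tau> 1 v) u) + \<tau> 1 (\<rho> (T u) v - \<rho> (T v) u)"
    by (simp add: atMost_Suc add.commute)
  moreover have "br (\<tau> 1 u) (T v) = - br (T v) (\<tau> 1 u)"
    using lie_algebra_bracket_antisym[OF assms(1)] .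
  ultimately show "d1 br \<rho> T (\<tau> 1) u v = 0"
    unfolding d1_def by (simp add: algebra_simps)
qed

lemma equivalent_deformations_infinitesimal_diff:
  assumes "lie_algebra sg br"
    and "formal_deformation sg br sv \<rho> T \<tau>bar"
    and "formal_deformation sg br sv \<rho> T \<tau>"
    and "equivalent_deformations sg br sv \<rho> \<tau>bar \<tau>"
  obtains x where "(\<lambda>u. \<tau>bar 1 u - \<tau> 1 u) = d0 br \<rho> T x"
proof -
  obtain x \<phi> \<psi> where "\<phi> 0 = id" "\<phi> 1 = br x" "\<psi> 0 = id" "\<psi> 1 = \<rho> x"
    and intertwine: "\<And>n u. (\<Sum>i\<le>n. \<tau> i (\<psi> (n - i) u)) = (\<Sum>i\<le>n. \<phi> i (\<tau>bar (n - i) u))"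
    using assms(4) unfolding equivalent_deformations_def by blast
  moreover have "\<tau>bar 0 = T" "\<tau> 0 = T"
    using assms(2,3) unfolding formal_deformation_def by blast+
  ultimately have order_one: "T (\<rho> x u) + \<tau> 1 u = \<tau>bar 1 u + br x (T u)" for u
    using intertwine[of 1 u] by (simp add: atMost_Suc add.commute)
  have "\<tau>bar 1 u - \<tau> 1 u = d0 br \<rho> T x u" for u
    using order_one[of u] lie_algebra_bracket_antisym[OF assms(1), of x "T u"]
    unfolding d0_def by (simp add: algebra_simps)
  then show thesis using that by blast
qed

theorem theorem5p7:
  fixes sg :: "'k::field \<Rightarrow> 'g::ab_group_add \<Rightarrow> 'g"
    and br :: "'g \<Rightarrow> 'g \<Rightarrow> 'g"
    and sv :: "'k \<Rightarrow> 'v::ab_group_add \<Rightarrow> 'v"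
    and \<rho> :: "'g \<Rightarrow> 'v \<Rightarrow> 'v"
    and T :: "'v \<Rightarrow> 'g"
    and \<tau>bar \<tau> :: "nat \<Rightarrow> 'v \<Rightarrow> 'g"
  assumes "lie_rep sg br sv \<rho>"
    and "O_operator sg br sv \<rho> T"
    and "formal_deformation sg br sv \<rho> T \<tau>bar"
    and "formal_deformation sg br sv \<rho> T \<tau>"
    and "equivalent_deformations sg br sv \<rho> \<tau>bar \<tau>"
  shows "same_H1_class sg br sv \<rho> T (\<tau>bar 1) (\<tau> 1)"
proof -
  have lie: "lie_algebra sg br" using assms(1) unfolding lie_rep_def by blast
  obtain x where "(\<lambda>u. \<tau>bar 1 u - \<tau> 1 u) = d0 br \<rho> T x"
    using equivalent_deformations_infinitesimal_diff[OF lie assms(3-5)] .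
  moreover have "Vector_Spaces.linear sv sg (\<tau>bar 1)" "Vector_Spaces.linear sv sg (\<tau> 1)"
    using assms(3,4) unfolding formal_deformation_def by blast+
  ultimately show ?thesis
    unfolding same_H1_class_def
    using formal_deformation_infinitesimal_cocycle[OF lie assms(3)]
      formal_deformation_infinitesimal_cocycle[OF lie assms(4)]
    by blast
qed

end
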